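(* Let $L\geq 2$ and work in the setting below. Suppose $\sigma\in C^2(\mathbb{R})$ with $|\sigma(z)|\leq M_0$, $|\sigma'(z)|\leq M_1$, $|\sigma''(z)|\leq M_2$ for all $z\in\mathbb{R}$, for some $M_0,M_1,M_2>0$. Let $R>0$ and assume that the parameters $\{W_l\}_{l=1}^L$ and $\{b_l,c_l\}_{l=1}^{L-1}$ (those held fixed in each statement below) all have Frobenius norm at most $R$. Then there exist constants $C_1,\dots,C_L>0$ such that: (i) for each $l=1,\dots,L-1$, regarding $S$ as a function of $c_l$ alone with all other parameters fixed, $$\|\nabla_{c_l}S(\hat c_l)-\nabla_{c_l}S(\tilde c_l)\|_{\mathrm F}\leq C_l\|\hat c_l-\tilde c_l\|_{\mathrm F}\quad\text{for all }\hat c_l,\tilde c_l\in\mathbb{R}^{M\times N};$$ (ii) regarding $S$ as a function of $W_L$ alone with all other parameters fixed, $$\|\nabla_{W_L}S(\hat W_L)-\nabla_{W_L}S(\tilde W_L)\|_{\mathrm F}\leq C_L\|\hat W_L-\tilde W_L\|_{\mathrm F}$$ for all $\hat W_L,\tilde W_L\in\mathbb{R}^{J\times M}$ with $\|\hat W_L\|_{\mathrm F},\|\tilde W_L\|_{\mathrm F}\leq R$.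
   Context: Data: $X\in\mathbb{R}^{d\times N}$, $A\in\mathbb{R}^{J\times N}$ with one-hot columns (entries in $\{0,1\}$, each column summing to $1$), $J\geq 2$. For $\boldsymbol z\in\mathbb{R}^J$ and one-hot $\boldsymbol\alpha$, $\ell(\boldsymbol z,\boldsymbol\alpha)=-\sum_j\alpha_j\ln\big(e^{z_j}/\sum_k e^{z_k}\big)$; for $Z=[\boldsymbol z_1\cdots\boldsymbol z_N]$, $\mathcal{L}_{\mathrm{vec}}(Z,A)=[\ell(\boldsymbol z_n,\boldsymbol\alpha_n)]_{n=1}^N\in\mathbb{R}^N$. Parameters: $W_1\in\mathbb{R}^{M\times d}$, $W_2,\dots,W_{L-1}\in\mathbb{R}^{M\times M}$, $W_L\in\mathbb{R}^{J\times M}$, $b_l\in\mathbb{R}^M$, $c_l\in\mathbb{R}^{M\times N}$ ($l\le L-1$); $\sigma$ acts entrywise; $\mathbf 1\in\mathbb{R}^N$ is the all-ones vector. Weights $\omega_l=\prod_{j=l+1}^L\|W_j\|_{\mathrm F}^2$, and $$S=\|\mathcal{L}_{\mathrm{vec}}(W_L\sigma(c_{L-1}),A)\|_2^2+\sum_{l=2}^{L-1}\omega_l\|W_l\sigma(c_{l-1})+b_l\mathbf 1^\top-c_l\|_{\mathrm F}^2+\omega_1\|W_1X+b_1\mathbf 1^\top-c_1\|_{\mathrm F}^2.$$ $\nabla_{c_l}S$ and $\nabla_{W_L}S$ denote the partial gradients of $S$ (with respect to the Frobenius inner product). *)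

theory Defs
  imports "HOL-Analysis.Analysis"
begin

text \<open>Matrices are Cartesian-product types: real^'n^'m is an m x n matrix;
  its norm is the Frobenius norm and its inner product the Frobenius inner product.\<close>

definition grad :: "('a::real_inner \<Rightarrow> real) \<Rightarrow> 'a \<Rightarrow> 'a" where
  "grad f x = (SOME g. (f has_derivative (\<lambda>h. g \<bullet> h)) (at x))"

definition sigm :: "(real \<Rightarrow> real) \<Rightarrow> real^'n^'m \<Rightarrow> real^'n^'m" where
  "sigm \<sigma> c = (\<chi> i j. \<sigma> (c $ i $ j))"

definition bias :: "real^'m \<Rightarrow> real^'n^'m" where
  "bias b = (\<chi> i j. b $ i)"

definition ce :: "real^'J \<Rightarrow> real^'J \<Rightarrow> real" where
  "ce z \<alpha> = - (\<Sum>j\<in>UNIV. \<alpha> $ j * ln (exp (z $ j) / (\<Sum>k\<in>UNIV. exp (z $ k))))"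

definition Lvec :: "real^'N^'J \<Rightarrow> real^'N^'J \<Rightarrow> real^'N" where
  "Lvec Z A = (\<chi> n. ce (column n Z) (column n A))"

definition onehot_cols :: "real^'N^'J \<Rightarrow> bool" where
  "onehot_cols A \<longleftrightarrow> (\<forall>n. (\<forall>j. A $ j $ n = 0 \<or> A $ j $ n = 1) \<and> (\<Sum>j\<in>UNIV. A $ j $ n) = 1)"

text \<open>omega l = prod_{j=l+1}^L ||W_j||^2, with W_L stored separately as WL and
  W_2..W_{L-1} as W.\<close>
definition omega :: "nat \<Rightarrow> (nat \<Rightarrow> real^'M^'M) \<Rightarrow> real^'M^'J \<Rightarrow> nat \<Rightarrow> real" where
  "omega L W WL l = (norm WL)^2 * (\<Prod>j\<in>{l+1..L-1}. (norm (W j))^2)"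

definition Sobj :: "(real \<Rightarrow> real) \<Rightarrow> real^'N^'d \<Rightarrow> real^'N^'J \<Rightarrow> nat \<Rightarrow>
    real^'d^'M \<Rightarrow> (nat \<Rightarrow> real^'M^'M) \<Rightarrow> real^'M^'J \<Rightarrow>
    (nat \<Rightarrow> real^'M) \<Rightarrow> (nat \<Rightarrow> real^'N^'M) \<Rightarrow> real" where
  "Sobj \<sigma> X A L W1 W WL b c =
     (norm (Lvec (WL ** sigm \<sigma> (c (L-1))) A))^2
     + (\<Sum>l\<in>{2..L-1}. omega L W WL l * (norm (W l ** sigm \<sigma> (c (l-1)) + bias (b l) - c l))^2)
     + omega L W WL 1 * (norm (W1 ** X + bias (b 1) - c 1))^2"

end

(*
  S is a sum of squared norms of affine functions of c_l (resp. W_L), composed at most once with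
  the entrywise activation, plus the squared cross-entropy loss; its gradient is obtained by the
  chain rule. Two facts make these gradients Lipschitz with constants depending only on R, M0, M1,
  M2, X, A and the dimensions. First, if Phi has a bounded gradient that is K-Lipschitz on a ball
  containing the range of Y |-> E sigma(Y), then Y |-> Phi (E sigma(Y)) has the gradient
  sigma'(Y) o (E^T grad Phi (E sigma(Y))) (o the entrywise product), which is Lipschitz because
  sigma' is bounded and, by |sigma''| <= M2, Lipschitz. Second, Z |-> ||L_vec(Z, A)||^2 has the
  gradient 2 l (softmax - alpha) column by column, which is bounded and Lipschitz on balls because
  log-sum-exp is 1-Lipschitz and softmax is locally Lipschitz. The weights omega_l are at most
  (1 + R^2)^L. In W_L, the loss term is Phi (W_L sigma(c_{L-1})) and all other terms are quadratic;
  the loss gradient is controlled only on bounded sets, hence the restriction ||W_L|| <= R in (ii).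
*)
theory Submission
  imports Defs
begin

section \<open>Frobenius norm and matrix products\<close>

lemma inner_matrix: "(X::real^'n^'m) \<bullet> Y = (\<Sum>i\<in>UNIV. \<Sum>j\<in>UNIV. X$i$j * Y$i$j)"
  by (simp add: inner_vec_def)

lemma norm_vec_sq: "(norm (x::real^'n))^2 = (\<Sum>i\<in>UNIV. (x$i)^2)"
proof -
  have "(norm x)^2 = x \<bullet> x" by (rule power2_norm_eq_inner)
  then show ?thesis by (simp add: inner_vec_def power2_eq_square)
qed

lemma norm_matrix_sq: "(norm (X::real^'n^'m))^2 = (\<Sum>i\<in>UNIV. \<Sum>j\<in>UNIV. (X$i$j)^2)"
proof -
  have "(norm X)^2 = X \<bullet> X" by (rule power2_norm_eq_inner)
  then show ?thesis by (simp add: inner_matrix power2_eq_square)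
qed

lemma abs_matrix_entry_le_norm: "\<bar>(X::real^'n^'m) $ i $ j\<bar> \<le> norm X"
  using component_le_norm_cart[of "X $ i" j] Finite_Cartesian_Product.norm_nth_le[of X i] by linarith

lemma norm_matrix_le_entrywise:
  fixes X Y :: "real^'n^'m"
  assumes "\<And>i j. \<bar>X $ i $ j\<bar> \<le> k * \<bar>Y $ i $ j\<bar>" and "0 \<le> k"
  shows "norm X \<le> k * norm Y"
proof (rule power2_le_imp_le)
  have "(X $ i $ j)^2 \<le> k^2 * (Y $ i $ j)^2" for i j
    using power_mono[OF assms(1)[of i j] abs_ge_zero, of 2] by (simp add: power_mult_distrib)
  then show "(norm X)^2 \<le> (k * norm Y)^2"
    by (simp add: norm_matrix_sq power_mult_distrib sum_distrib_left sum_mono)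
qed (use assms in simp)

lemma norm_matrix_le_const:
  fixes X :: "real^'n^'m"
  assumes "\<And>i j. \<bar>X $ i $ j\<bar> \<le> k"
  shows "norm X \<le> sqrt (CARD('m) * CARD('n)) * k"
proof -
  have "norm X \<le> k * norm (\<chi> (i::'m) (j::'n). (1::real))"
    using assms by (intro norm_matrix_le_entrywise) (auto intro: order_trans[OF abs_ge_zero])
  also have "norm (\<chi> (i::'m) (j::'n). (1::real)) = sqrt (CARD('m) * CARD('n))"
    by (simp add: norm_eq_sqrt_inner inner_vec_def)
  finally show ?thesis by (simp add: mult.commute)
qed

lemma norm_matrix_mult_le: "norm ((A::real^'n^'m) ** (B::real^'p^'n)) \<le> norm A * norm B"
proof (rule power2_le_imp_le)
  have "((A ** B) $ i $ j)^2 \<le> (\<Sum>k\<in>UNIV. (A $ i $ k)^2) * (\<Sum>k\<in>UNIV. (B $ k $ j)^2)" for i j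
    unfolding matrix_matrix_mult_def by (simp add: Cauchy_Schwarz_ineq_sum)
  then have "(norm (A ** B))^2 \<le> (\<Sum>i\<in>UNIV. \<Sum>j\<in>UNIV. (\<Sum>k\<in>UNIV. (A $ i $ k)^2) * (\<Sum>k\<in>UNIV. (B $ k $ j)^2))"
    unfolding norm_matrix_sq by (intro sum_mono) auto
  also have "\<dots> = (\<Sum>i\<in>UNIV. \<Sum>k\<in>UNIV. (A $ i $ k)^2) * (\<Sum>j\<in>UNIV. \<Sum>k\<in>UNIV. (B $ k $ j)^2)"
    by (simp add: sum_product)
  also have "(\<Sum>j\<in>UNIV. \<Sum>k\<in>UNIV. (B $ k $ j)^2) = (norm B)^2"
    unfolding norm_matrix_sq by (rule sum.swap)
  finally show "(norm (A ** B))^2 \<le> (norm A * norm B)^2"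
    by (simp add: norm_matrix_sq power_mult_distrib)
qed simp

lemma bounded_bilinear_matrix_mult:
  "bounded_bilinear ((**) :: real^'n^'m \<Rightarrow> real^'p^'n \<Rightarrow> real^'p^'m)"
proof
  show "\<exists>K. \<forall>A B. norm ((A::real^'n^'m) ** (B::real^'p^'n)) \<le> norm A * norm B * K"
    using norm_matrix_mult_le by (metis mult.right_neutral)
qed (simp_all add: matrix_add_ldistrib scalar_matrix_assoc matrix_scalar_ac,
     simp add: matrix_matrix_mult_def vec_eq_iff distrib_right sum.distrib)

lemmas matrix_mult_diff_left = bounded_bilinear.diff_left[OF bounded_bilinear_matrix_mult]
lemmas matrix_mult_diff_right = bounded_bilinear.diff_right[OF bounded_bilinear_matrix_mult]

lemma lipschitz_on_matrix_mult_left: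
  assumes "norm E \<le> R"
  shows "R-lipschitz_on U (\<lambda>Z. (E::real^'n^'m) ** (Z::real^'p^'n))"
proof (rule lipschitz_onI)
  show "dist (E ** X) (E ** Y) \<le> R * dist X Y" for X Y :: "real^'p^'n"
    using norm_matrix_mult_le[of E "X - Y"] mult_right_mono[OF assms norm_ge_zero[of "X - Y"]]
    by (simp add: dist_norm matrix_mult_diff_right)
  show "0 \<le> R" using assms norm_ge_zero order_trans by blast
qed

lemma lipschitz_on_matrix_mult_right:
  assumes "norm S \<le> R"
  shows "R-lipschitz_on U (\<lambda>Z. (Z::real^'n^'m) ** (S::real^'p^'n))"
proof (rule lipschitz_onI)
  show "dist (X ** S) (Y ** S) \<le> R * dist X Y" for X Y :: "real^'n^'m"
    using norm_matrix_mult_le[of "X - Y" S] mult_left_mono[OF assms norm_ge_zero[of "X - Y"]]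
    by (simp add: dist_norm matrix_mult_diff_left mult.commute)
  show "0 \<le> R" using assms norm_ge_zero order_trans by blast
qed

lemma norm_transpose: "norm (transpose (A::real^'n^'m)) = norm A"
proof -
  have "(norm (transpose A))^2 = (norm A)^2"
    unfolding norm_matrix_sq transpose_def by (simp, rule sum.swap)
  then show ?thesis by (simp add: power2_eq_iff_nonneg)
qed

lemma norm_column_le: "norm (column j (A::real^'n^'m)) \<le> norm A"
  using Finite_Cartesian_Product.norm_nth_le[of "transpose A" j]
  by (simp add: norm_transpose flip: row_transpose) (simp add: row_def vec_nth_inverse)

lemma inner_matrix_mult_left: "(Z::real^'p^'m) \<bullet> ((E::real^'n^'m) ** H) = (transpose E ** Z) \<bullet> H"
proof -
  have "Z \<bullet> (E ** H) = (\<Sum>i\<in>UNIV. \<Sum>j\<in>UNIV. \<Sum>k\<in>UNIV. Z$i$j * (E$i$k * H$k$j))"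
    by (simp add: inner_matrix matrix_matrix_mult_def sum_distrib_left)
  also have "\<dots> = (\<Sum>i\<in>UNIV. \<Sum>k\<in>UNIV. \<Sum>j\<in>UNIV. Z$i$j * (E$i$k * H$k$j))"
    by (rule sum.cong[OF refl], rule sum.swap)
  also have "\<dots> = (\<Sum>k\<in>UNIV. \<Sum>i\<in>UNIV. \<Sum>j\<in>UNIV. Z$i$j * (E$i$k * H$k$j))"
    by (rule sum.swap)
  also have "\<dots> = (\<Sum>k\<in>UNIV. \<Sum>j\<in>UNIV. \<Sum>i\<in>UNIV. Z$i$j * (E$i$k * H$k$j))"
    by (rule sum.cong[OF refl], rule sum.swap)
  also have "\<dots> = (transpose E ** Z) \<bullet> H"
    by (simp add: inner_matrix matrix_matrix_mult_def transpose_def sum_distrib_left mult_ac)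
  finally show ?thesis .
qed

lemma inner_matrix_mult_right: "(Z::real^'p^'m) \<bullet> ((H::real^'n^'m) ** S) = (Z ** transpose S) \<bullet> H"
proof -
  have "Z \<bullet> (H ** S) = (\<Sum>i\<in>UNIV. \<Sum>j\<in>UNIV. \<Sum>k\<in>UNIV. Z$i$j * (H$i$k * S$k$j))"
    by (simp add: inner_matrix matrix_matrix_mult_def sum_distrib_left)
  also have "\<dots> = (\<Sum>i\<in>UNIV. \<Sum>k\<in>UNIV. \<Sum>j\<in>UNIV. Z$i$j * (H$i$k * S$k$j))"
    by (rule sum.cong[OF refl], rule sum.swap)
  also have "\<dots> = (Z ** transpose S) \<bullet> H"
    by (simp add: inner_matrix matrix_matrix_mult_def transpose_def sum_distrib_left mult_ac)
  finally show ?thesis .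
qed

lemma norm_bias: "norm (bias b :: real^'n^'m) = sqrt CARD('n) * norm b"
proof -
  have "(norm (bias b :: real^'n^'m))^2 = CARD('n) * (norm b)^2"
    unfolding norm_matrix_sq norm_vec_sq bias_def by (simp add: sum_distrib_left)
  then show ?thesis
    by (metis norm_ge_zero real_sqrt_mult real_sqrt_abs real_sqrt_unique abs_norm_cancel)
qed

definition hadamard :: "real^'n^'m \<Rightarrow> real^'n^'m \<Rightarrow> real^'n^'m" where
  "hadamard a h = (\<chi> i j. a $ i $ j * h $ i $ j)"

lemma inner_hadamard: "u \<bullet> hadamard a h = hadamard a u \<bullet> h"
  by (simp add: hadamard_def inner_matrix mult_ac)

lemma hadamard_diff_left: "hadamard (a - b) h = hadamard a h - hadamard b h"
  by (simp add: hadamard_def vec_eq_iff left_diff_distrib)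

lemma hadamard_diff_right: "hadamard a (h - k) = hadamard a h - hadamard a k"
  by (simp add: hadamard_def vec_eq_iff right_diff_distrib)

lemma norm_hadamard_le:
  assumes "\<And>i j. \<bar>a $ i $ j\<bar> \<le> k"
  shows "norm (hadamard a h) \<le> k * norm h"
  using assms by (intro norm_matrix_le_entrywise)
    (auto simp: hadamard_def abs_mult intro: mult_right_mono order_trans[OF abs_ge_zero])

lemma norm_hadamard_le_mult: "norm (hadamard a h) \<le> norm a * norm h"
  using norm_hadamard_le[of h "norm h" a] abs_matrix_entry_le_norm[of h]
  by (simp add: hadamard_def mult.commute)

section \<open>Functions with Lipschitz gradient\<close>

lemma has_derivative_vecI:
  fixes f :: "'a::euclidean_space \<Rightarrow> 'b::real_normed_vector^'n"
  assumes "\<And>i. ((\<lambda>x. f x $ i) has_derivative (\<lambda>h. f' h $ i)) F"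
  shows "(f has_derivative f') F"
proof -
  have "linear f'"
    using assms[THEN has_derivative_linear] by (auto simp: linear_iff vec_eq_iff)
  then have "bounded_linear f'" by (simp add: linear_conv_bounded_linear)
  moreover
  let ?l = "Lim F (\<lambda>x. x)"
  have "((\<lambda>y. \<chi> i. ((f y $ i - f ?l $ i) - f' (y - ?l) $ i) /\<^sub>R norm (y - ?l)) \<longlongrightarrow> (\<chi> i. 0)) F"
    using assms unfolding has_derivative_def by (intro tendsto_vec_lambda) blast
  moreover have "(\<lambda>y. \<chi> i. ((f y $ i - f ?l $ i) - f' (y - ?l) $ i) /\<^sub>R norm (y - ?l))
     = (\<lambda>y. ((f y - f ?l) - f' (y - ?l)) /\<^sub>R norm (y - ?l))"
    by (simp add: vec_eq_iff fun_eq_iff)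
  ultimately show ?thesis unfolding has_derivative_def by (simp add: zero_vec_def)
qed

lemma grad_eqI:
  assumes "(f has_derivative (\<lambda>h. g \<bullet> h)) (at x)"
  shows "grad f x = g"
proof -
  have "(f has_derivative (\<lambda>h. grad f x \<bullet> h)) (at x)"
    unfolding grad_def using assms by (rule someI)
  then have "(\<lambda>h. grad f x \<bullet> h) = (\<lambda>h. g \<bullet> h)"
    using assms by (rule has_derivative_unique)
  then have "(grad f x - g) \<bullet> (grad f x - g) = 0"
    by (metis inner_diff_left right_minus_eq)
  then show ?thesis by simp
qed

definition lipschitz_grad_on :: "real \<Rightarrow> 'a set \<Rightarrow> ('a::real_inner \<Rightarrow> real) \<Rightarrow> bool" where
  "lipschitz_grad_on K U f \<longleftrightarrow>
     (\<forall>x. (f has_derivative (\<lambda>h. grad f x \<bullet> h)) (at x)) \<and> K-lipschitz_on U (grad f)"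

lemma lipschitz_grad_onI:
  assumes "\<And>x. (f has_derivative (\<lambda>h. G x \<bullet> h)) (at x)" and "K-lipschitz_on U G"
  shows "lipschitz_grad_on K U f"
proof -
  have "grad f = G" using grad_eqI[OF assms(1)] by blast
  then show ?thesis using assms unfolding lipschitz_grad_on_def by simp
qed

lemma lipschitz_grad_onD:
  assumes "lipschitz_grad_on K U f"
  shows "(f has_derivative (\<lambda>h. grad f x \<bullet> h)) (at x)" and "K-lipschitz_on U (grad f)"
  using assms unfolding lipschitz_grad_on_def by auto

lemma lipschitz_grad_on_mono:
  "lipschitz_grad_on K U f \<Longrightarrow> V \<subseteq> U \<Longrightarrow> K \<le> K' \<Longrightarrow> lipschitz_grad_on K' V f"
  unfolding lipschitz_grad_on_def using lipschitz_on_mono by blast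

lemma lipschitz_grad_on_const: "lipschitz_grad_on 0 U (\<lambda>x. a)"
  by (rule lipschitz_grad_onI[where G="\<lambda>x. 0"]) (auto intro: lipschitz_on_constant)

lemma lipschitz_grad_on_add:
  assumes "lipschitz_grad_on K U f" and "lipschitz_grad_on K' U g"
  shows "lipschitz_grad_on (K + K') U (\<lambda>x. f x + g x)"
proof (rule lipschitz_grad_onI[where G="\<lambda>x. grad f x + grad g x"])
  show "((\<lambda>x. f x + g x) has_derivative (\<lambda>h. (grad f x + grad g x) \<bullet> h)) (at x)" for x
    using has_derivative_add assms unfolding lipschitz_grad_on_def inner_add_left by blast
  show "(K + K')-lipschitz_on U (\<lambda>x. grad f x + grad g x)"
    using assms unfolding lipschitz_grad_on_def by (blast intro: lipschitz_on_add)
qed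

lemma lipschitz_grad_on_sum:
  assumes "finite I" and "\<And>k. k \<in> I \<Longrightarrow> lipschitz_grad_on (K k) U (f k)"
  shows "lipschitz_grad_on (\<Sum>k\<in>I. K k) U (\<lambda>x. \<Sum>k\<in>I. f k x)"
  using assms by (induction I rule: finite_induct) (auto intro: lipschitz_grad_on_const lipschitz_grad_on_add)

lemma lipschitz_grad_on_cmult:
  assumes "lipschitz_grad_on K U f" and "\<bar>a\<bar> \<le> B"
  shows "lipschitz_grad_on (B * K) U (\<lambda>x. a * f x)"
proof (rule lipschitz_grad_onI[where G="\<lambda>x. a *\<^sub>R grad f x"])
  show "((\<lambda>x. a * f x) has_derivative (\<lambda>h. (a *\<^sub>R grad f x) \<bullet> h)) (at x)" for x
    using assms(1) unfolding lipschitz_grad_on_def by (simp add: has_derivative_mult_right)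
  show "(B * K)-lipschitz_on U (\<lambda>x. a *\<^sub>R grad f x)"
    using assms unfolding lipschitz_grad_on_def by (blast intro: lipschitz_on_cmult_upper)
qed

lemma has_derivative_norm_sq:
  "((\<lambda>x. a * (norm (x - P))^2) has_derivative (\<lambda>h. ((2 * a) *\<^sub>R (x - P)) \<bullet> h)) (at x)"
proof -
  have "((\<lambda>x. a * ((x - P) \<bullet> (x - P))) has_derivative (\<lambda>h. a * ((x - P) \<bullet> h + h \<bullet> (x - P)))) (at x)"
    by (auto intro!: derivative_eq_intros)
  then show ?thesis
    by (simp add: power2_norm_eq_inner inner_commute algebra_simps)
qed

lemma grad_norm_sq: "grad (\<lambda>x. a * (norm (x - P))^2) x = (2 * a) *\<^sub>R (x - P)"
  by (rule grad_eqI[OF has_derivative_norm_sq])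

lemma lipschitz_grad_on_norm_sq: "lipschitz_grad_on (2 * \<bar>a\<bar>) U (\<lambda>x. a * (norm (x - P))^2)"
proof (rule lipschitz_grad_onI[OF has_derivative_norm_sq])
  have "(\<bar>2 * a\<bar> * 1)-lipschitz_on U (\<lambda>x. (2 * a) *\<^sub>R (x - P))"
    by (intro lipschitz_on_cmult lipschitz_on_diff[of 1 _ _ 0, simplified] lipschitz_intros)
  then show "(2 * \<bar>a\<bar>)-lipschitz_on U (\<lambda>x. (2 * a) *\<^sub>R (x - P))"
    by (simp add: abs_mult)
qed

lemma lipschitz_grad_on_comp_mult_right:
  fixes \<Phi> :: "real^'N^'J \<Rightarrow> real" and S :: "real^'N^'M"
  assumes \<Phi>: "lipschitz_grad_on K (cball 0 (R * norm S)) \<Phi>"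
  shows "lipschitz_grad_on (K * (norm S)^2) (cball 0 R) (\<lambda>V::real^'M^'J. \<Phi> (V ** S))"
proof (rule lipschitz_grad_onI[where G="\<lambda>V. grad \<Phi> (V ** S) ** transpose S"])
  fix V :: "real^'M^'J"
  have "((\<lambda>V. V ** S) has_derivative (\<lambda>h. h ** S)) (at V)"
    by (rule bounded_linear_imp_has_derivative[OF bounded_bilinear.bounded_linear_left[OF bounded_bilinear_matrix_mult]])
  moreover note lipschitz_grad_onD(1)[OF \<Phi>, of "V ** S"]
  ultimately have "((\<lambda>V. \<Phi> (V ** S)) has_derivative (\<lambda>h. grad \<Phi> (V ** S) \<bullet> (h ** S))) (at V)"
    by (rule has_derivative_compose)
  then show "((\<lambda>V. \<Phi> (V ** S)) has_derivative (\<lambda>h. (grad \<Phi> (V ** S) ** transpose S) \<bullet> h)) (at V)"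
    by (simp add: inner_matrix_mult_right)
next
  have "V ** S \<in> cball 0 (R * norm S)" if "V \<in> cball 0 R" for V :: "real^'M^'J"
    using that norm_matrix_mult_le[of V S] mult_right_mono[OF _ norm_ge_zero[of S]]
    by (auto intro: order_trans)
  then have "K-lipschitz_on ((\<lambda>V. V ** S) ` cball 0 R) (grad \<Phi>)"
    by (blast intro: lipschitz_on_subset[OF lipschitz_grad_onD(2)[OF \<Phi>]])
  with lipschitz_on_matrix_mult_right[OF order_refl]
  have "(K * norm S)-lipschitz_on (cball 0 R) (\<lambda>V::real^'M^'J. grad \<Phi> (V ** S))"
    by (rule lipschitz_on_compose2)
  then have "(norm S * (K * norm S))-lipschitz_on (cball 0 R) (\<lambda>V. grad \<Phi> (V ** S) ** transpose S)"
    by (rule lipschitz_on_compose2[OF _ lipschitz_on_matrix_mult_right]) (simp add: norm_transpose)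
  then show "(K * (norm S)^2)-lipschitz_on (cball 0 R) (\<lambda>V. grad \<Phi> (V ** S) ** transpose S)"
    by (simp add: power2_eq_square mult_ac)
qed

section \<open>Entrywise activation\<close>

lemma norm_sigm_le:
  assumes "\<And>z. \<bar>f z\<bar> \<le> M"
  shows "norm (sigm f Y :: real^'n^'m) \<le> sqrt (CARD('m) * CARD('n)) * M"
  using assms by (intro norm_matrix_le_const) (simp add: sigm_def)

lemma lipschitz_on_sigm:
  assumes "C-lipschitz_on UNIV f"
  shows "C-lipschitz_on UNIV (sigm f :: real^'n^'m \<Rightarrow> real^'n^'m)"
proof (rule lipschitz_onI)
  show "0 \<le> C" using assms by (rule lipschitz_on_nonneg)
  fix X Y :: "real^'n^'m"
  have "\<bar>(sigm f X - sigm f Y) $ i $ j\<bar> \<le> C * \<bar>(X - Y) $ i $ j\<bar>" for i j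
    using lipschitz_onD[OF assms, of "X $ i $ j" "Y $ i $ j"] by (simp add: sigm_def dist_real_def)
  then show "dist (sigm f X) (sigm f Y) \<le> C * dist X Y"
    unfolding dist_norm using \<open>0 \<le> C\<close> by (rule norm_matrix_le_entrywise)
qed

lemma has_derivative_sigm:
  assumes "\<And>z. (f has_real_derivative f' z) (at z)"
  shows "((sigm f :: real^'n^'m \<Rightarrow> _) has_derivative hadamard (sigm f' Y)) (at Y)"
proof -
  have "((\<lambda>X. f (X $ i $ j)) has_derivative (\<lambda>h. h $ i $ j * f' (Y $ i $ j))) (at Y)" for i j
    by (intro DERIV_compose_FDERIV[OF assms] bounded_linear_imp_has_derivative
        bounded_linear_compose[OF bounded_linear_vec_nth bounded_linear_vec_nth])
  then show ?thesis
    unfolding sigm_def hadamard_def by (intro has_derivative_vecI) (simp add: mult.commute)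
qed

lemma lipschitz_on_hadamard_sigm:
  assumes "\<And>z. \<bar>f z\<bar> \<le> M" and "C-lipschitz_on UNIV f"
    and "\<And>Y. norm (U Y) \<le> Ub" and "KU-lipschitz_on UNIV U"
  shows "(C * Ub + M * KU)-lipschitz_on UNIV (\<lambda>Y::real^'n^'m. hadamard (sigm f Y) (U Y))"
proof (rule lipschitz_onI)
  have M: "0 \<le> M" using assms(1) by (rule order_trans[OF abs_ge_zero])
  fix X Y :: "real^'n^'m"
  have "hadamard (sigm f X) (U X) - hadamard (sigm f Y) (U Y)
      = hadamard (sigm f X - sigm f Y) (U X) + hadamard (sigm f Y) (U X - U Y)"
    by (simp add: hadamard_diff_left hadamard_diff_right)
  also have "norm \<dots> \<le> C * dist X Y * Ub + M * (KU * dist X Y)"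
  proof (rule norm_triangle_le[OF add_mono])
    show "norm (hadamard (sigm f X - sigm f Y) (U X)) \<le> C * dist X Y * Ub"
      using norm_hadamard_le_mult[of "sigm f X - sigm f Y" "U X"] assms(3)[of X]
        lipschitz_onD[OF lipschitz_on_sigm[OF assms(2)], of X Y]
      by (simp add: dist_norm) (meson mult_mono norm_ge_zero order_trans)
    show "norm (hadamard (sigm f Y) (U X - U Y)) \<le> M * (KU * dist X Y)"
      using norm_hadamard_le[of "sigm f Y" M "U X - U Y"] lipschitz_onD[OF assms(4), of X Y] M
      by (simp add: sigm_def assms(1) dist_norm) (meson mult_left_mono order_trans)
  qed
  finally show "dist (hadamard (sigm f X) (U X)) (hadamard (sigm f Y) (U Y)) \<le> (C * Ub + M * KU) * dist X Y"
    by (simp add: dist_norm algebra_simps)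
next
  show "0 \<le> C * Ub + M * KU"
    using assms order_trans[OF norm_ge_zero assms(3)] lipschitz_on_nonneg
    by (metis abs_ge_zero add_nonneg_nonneg mult_nonneg_nonneg order_trans)
qed

locale bounded_activation =
  fixes \<sigma> \<sigma>' :: "real \<Rightarrow> real" and M0 M1 M2 :: real
  assumes has_real_derivative: "\<And>z. (\<sigma> has_real_derivative \<sigma>' z) (at z)"
    and bounded: "\<And>z. \<bar>\<sigma> z\<bar> \<le> M0"
    and derivative_bounded: "\<And>z. \<bar>\<sigma>' z\<bar> \<le> M1"
    and derivative_lipschitz: "M2-lipschitz_on UNIV \<sigma>'"
begin

lemma lipschitz: "M1-lipschitz_on UNIV \<sigma>"
proof (rule lipschitz_onI)
  show "0 \<le> M1" using derivative_bounded by (rule order_trans[OF abs_ge_zero])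
  show "dist (\<sigma> x) (\<sigma> y) \<le> M1 * dist x y" for x y
    using field_differentiable_bound[of UNIV \<sigma> \<sigma>' M1 x y] has_real_derivative derivative_bounded
    by (simp add: dist_norm)
qed

lemma norm_mult_sigm_le:
  fixes E :: "real^'M^'J" and Y :: "real^'N^'M"
  assumes "norm E \<le> R"
  shows "norm (E ** sigm \<sigma> Y) \<le> R * (sqrt (CARD('M) * CARD('N)) * M0)"
proof -
  have "norm (E ** sigm \<sigma> Y) \<le> norm E * norm (sigm \<sigma> Y)" by (rule norm_matrix_mult_le)
  also have "\<dots> \<le> R * (sqrt (CARD('M) * CARD('N)) * M0)"
    using assms by (intro mult_mono norm_sigm_le bounded) (auto intro: order_trans[OF norm_ge_zero])
  finally show ?thesis .
qed

lemma lipschitz_grad_on_comp_activation: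
  fixes \<Phi> :: "real^'N^'J \<Rightarrow> real" and E :: "real^'M^'J"
  assumes \<Phi>: "lipschitz_grad_on K (cball 0 B) \<Phi>"
    and grad_le: "\<And>Z. norm Z \<le> B \<Longrightarrow> norm (grad \<Phi> Z) \<le> G"
    and E: "norm E \<le> R"
    and B: "R * (sqrt (CARD('M) * CARD('N)) * M0) \<le> B"
  shows "lipschitz_grad_on (R * (M2 * G + M1^2 * R * K)) UNIV (\<lambda>Y::real^'N^'M. \<Phi> (E ** sigm \<sigma> Y))"
proof -
  define U where "U Y = transpose E ** grad \<Phi> (E ** sigm \<sigma> Y)" for Y :: "real^'N^'M"
  have in_ball: "E ** sigm \<sigma> Y \<in> cball 0 B" for Y :: "real^'N^'M"
    using norm_mult_sigm_le[OF E, of Y] B by simp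
  have norm_U: "norm (U Y) \<le> R * G" for Y
  proof -
    have "norm (U Y) \<le> norm (transpose E) * norm (grad \<Phi> (E ** sigm \<sigma> Y))"
      unfolding U_def by (rule norm_matrix_mult_le)
    also have "\<dots> \<le> R * G"
      using E grad_le in_ball unfolding norm_transpose
      by (intro mult_mono) (auto intro: order_trans[OF norm_ge_zero])
    finally show ?thesis .
  qed
  have "(R * M1)-lipschitz_on UNIV (\<lambda>Y::real^'N^'M. E ** sigm \<sigma> Y)"
    using lipschitz_on_compose2[OF lipschitz_on_sigm[OF lipschitz] lipschitz_on_matrix_mult_left[OF E]]
    by (simp add: mult.commute)
  moreover have "K-lipschitz_on (range (\<lambda>Y::real^'N^'M. E ** sigm \<sigma> Y)) (grad \<Phi>)"
    using in_ball by (blast intro: lipschitz_on_subset[OF lipschitz_grad_onD(2)[OF \<Phi>]])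
  ultimately have "(K * (R * M1))-lipschitz_on UNIV (\<lambda>Y. grad \<Phi> (E ** sigm \<sigma> Y))"
    by (rule lipschitz_on_compose2)
  then have U_lipschitz: "(R * (K * (R * M1)))-lipschitz_on UNIV U"
    unfolding U_def
    by (rule lipschitz_on_compose2[OF _ lipschitz_on_matrix_mult_left]) (simp add: norm_transpose E)
  show ?thesis
  proof (rule lipschitz_grad_onI[where G="\<lambda>Y. hadamard (sigm \<sigma>' Y) (U Y)"])
    fix Y :: "real^'N^'M"
    have "((\<lambda>Y. E ** sigm \<sigma> Y) has_derivative (\<lambda>h. E ** hadamard (sigm \<sigma>' Y) h)) (at Y)"
      using bounded_bilinear.bounded_linear_right[OF bounded_bilinear_matrix_mult]
      by (intro has_derivative_compose[OF has_derivative_sigm[OF has_real_derivative]]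
          bounded_linear_imp_has_derivative)
    moreover note lipschitz_grad_onD(1)[OF \<Phi>, of "E ** sigm \<sigma> Y"]
    ultimately have "((\<lambda>Y. \<Phi> (E ** sigm \<sigma> Y)) has_derivative
        (\<lambda>h. grad \<Phi> (E ** sigm \<sigma> Y) \<bullet> (E ** hadamard (sigm \<sigma>' Y) h))) (at Y)"
      by (rule has_derivative_compose)
    then show "((\<lambda>Y. \<Phi> (E ** sigm \<sigma> Y)) has_derivative (\<lambda>h. hadamard (sigm \<sigma>' Y) (U Y) \<bullet> h)) (at Y)"
      by (simp add: U_def inner_matrix_mult_left inner_hadamard)
  next
    show "(R * (M2 * G + M1^2 * R * K))-lipschitz_on UNIV (\<lambda>Y. hadamard (sigm \<sigma>' Y) (U Y))"
      using lipschitz_on_hadamard_sigm[OF derivative_bounded derivative_lipschitz norm_U U_lipschitz]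
      by (simp add: algebra_simps power2_eq_square)
  qed
qed

end

section \<open>Softmax cross-entropy\<close>

definition lse :: "real^'J \<Rightarrow> real" where
  "lse z = ln (\<Sum>k\<in>UNIV. exp (z $ k))"

definition softmax :: "real^'J \<Rightarrow> real^'J" where
  "softmax z = (\<chi> j. exp (z $ j) / (\<Sum>k\<in>UNIV. exp (z $ k)))"

lemma sum_exp_pos: "0 < (\<Sum>k\<in>UNIV. exp ((z::real^'J) $ k))"
  by (rule sum_pos) auto

lemma ce_eq_lse:
  assumes "(\<Sum>j\<in>UNIV. \<alpha> $ j) = 1"
  shows "ce z \<alpha> = lse z - \<alpha> \<bullet> z"
proof -
  have "ln (exp (z $ j) / (\<Sum>k\<in>UNIV. exp (z $ k))) = z $ j - lse z" for j
    using sum_exp_pos[of z] by (simp add: lse_def ln_div)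
  then have "ce z \<alpha> = (\<Sum>j\<in>UNIV. \<alpha> $ j) * lse z - \<alpha> \<bullet> z"
    by (simp add: ce_def inner_vec_def right_diff_distrib sum_subtractf sum_distrib_right)
  then show ?thesis using assms by simp
qed

lemma has_derivative_lse: "(lse has_derivative (\<lambda>h. softmax z \<bullet> h)) (at z)"
proof -
  have "((\<lambda>z. exp (z $ k)) has_derivative (\<lambda>h. h $ k * exp (z $ k))) (at z)" for k
    by (rule DERIV_compose_FDERIV[OF DERIV_exp bounded_linear_imp_has_derivative[OF bounded_linear_vec_nth]])
  then have "((\<lambda>z. \<Sum>k\<in>UNIV. exp (z $ k)) has_derivative (\<lambda>h. \<Sum>k\<in>UNIV. h $ k * exp (z $ k))) (at z)"
    by (rule has_derivative_sum)
  from DERIV_compose_FDERIV[OF DERIV_ln[OF sum_exp_pos] this]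
  show ?thesis
    unfolding lse_def
    by (rule has_derivative_eq_rhs)
      (simp add: fun_eq_iff softmax_def inner_vec_def sum_distrib_left sum_distrib_right divide_inverse mult_ac)
qed

lemma sum_exp_le_shift:
  assumes "\<And>k. (w::real^'J) $ k \<le> z $ k + d"
  shows "(\<Sum>k\<in>UNIV. exp (w $ k)) \<le> exp d * (\<Sum>k\<in>UNIV. exp (z $ k))"
  unfolding sum_distrib_left
  by (rule sum_mono) (use assms in \<open>simp add: add.commute flip: exp_add\<close>)

lemma component_le_add_dist: "(w::real^'J) $ k \<le> z $ k + dist z w"
  using component_le_norm_cart[of "z - w" k] by (simp add: dist_norm)

lemma lse_lipschitz: "1-lipschitz_on UNIV lse"
proof (rule lipschitz_onI)
  have le: "lse w \<le> lse z + dist z w" for z w :: "real^'J"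
  proof -
    have "lse w \<le> ln (exp (dist z w) * (\<Sum>k\<in>UNIV. exp (z $ k)))"
      unfolding lse_def using sum_exp_pos[of w] sum_exp_pos[of z]
      by (subst ln_le_cancel_iff) (auto intro: sum_exp_le_shift component_le_add_dist)
    then show ?thesis using sum_exp_pos[of z] by (simp add: ln_mult lse_def)
  qed
  show "dist (lse z) (lse w) \<le> 1 * dist z w" for z w :: "real^'J"
    using le[of z w] le[of w z] by (simp add: dist_real_def dist_commute abs_le_iff)
qed simp

lemma abs_lse_le: "\<bar>lse (z::real^'J)\<bar> \<le> norm z + ln CARD('J)"
proof -
  have "lse (0::real^'J) = ln CARD('J)" by (simp add: lse_def)
  then have "\<bar>lse z - ln CARD('J)\<bar> \<le> norm z"
    using lipschitz_onD[OF lse_lipschitz, of z 0] by (simp add: dist_real_def)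
  moreover have "0 \<le> ln CARD('J)" by simp
  ultimately show ?thesis by linarith
qed

lemma softmax_nonneg: "0 \<le> softmax z $ j"
  by (simp add: softmax_def sum_exp_pos less_imp_le)

lemma softmax_le_one: "softmax z $ j \<le> 1"
  using member_le_sum[of j UNIV "\<lambda>k. exp (z $ k)"] sum_exp_pos[of z] by (simp add: softmax_def)

lemma softmax_le_exp_mult: "softmax w $ j \<le> exp (2 * dist z w) * softmax z $ j"
proof -
  let ?d = "dist z w" and ?Sz = "\<Sum>k\<in>UNIV. exp (z $ k)" and ?Sw = "\<Sum>k\<in>UNIV. exp (w $ k)"
  have num: "exp (w $ j) \<le> exp ?d * exp (z $ j)"
    using component_le_add_dist[of w j z] by (simp add: add.commute flip: exp_add)
  have den: "?Sz \<le> exp ?d * ?Sw"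
    by (rule sum_exp_le_shift) (metis component_le_add_dist dist_commute)
  have "exp (w $ j) * ?Sz \<le> (exp ?d * exp (z $ j)) * (exp ?d * ?Sw)"
    by (intro mult_mono num den) (auto intro: sum_nonneg)
  also have "\<dots> = (exp ?d * exp ?d) * exp (z $ j) * ?Sw"
    by (simp only: mult_ac)
  also have "exp ?d * exp ?d = exp (2 * ?d)"
    by (metis exp_add mult_2)
  finally show ?thesis
    using sum_exp_pos[of z] sum_exp_pos[of w]
    by (simp add: softmax_def pos_divide_le_eq pos_le_divide_eq mult_ac)
qed

lemma exp_minus_one_le: "exp x - 1 \<le> x * exp (x::real)"
proof -
  have "exp x * (1 - x) \<le> exp x * exp (- x)"
    using exp_ge_add_one_self[of "- x"] by (intro mult_left_mono) auto
  then show ?thesis by (simp add: exp_minus algebra_simps)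
qed

text \<open>Softmax is in fact 1-Lipschitz, but this cruder local bound suffices.\<close>
lemma abs_softmax_diff_le: "\<bar>softmax z $ j - softmax w $ j\<bar> \<le> 2 * dist z w * exp (2 * dist z w)"
proof -
  have close: "a - b \<le> e - 1" if "a \<le> e * b" "b \<le> 1" "1 \<le> e" for a b e :: real
  proof -
    have "(e - 1) * b \<le> e - 1" using that(2,3) by (intro mult_left_le) auto
    then show ?thesis using that(1) by (simp add: algebra_simps)
  qed
  have "\<bar>softmax z $ j - softmax w $ j\<bar> \<le> exp (2 * dist z w) - 1"
    using close[OF softmax_le_exp_mult[where z=w and w=z] softmax_le_one]
      close[OF softmax_le_exp_mult[where z=z and w=w] softmax_le_one]
    by (simp add: abs_le_iff dist_commute)
  also have "\<dots> \<le> 2 * dist z w * exp (2 * dist z w)" by (rule exp_minus_one_le)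
  finally show ?thesis .
qed

lemma has_derivative_ce:
  assumes "(\<Sum>j\<in>UNIV. \<alpha> $ j) = 1"
  shows "((\<lambda>z. ce z \<alpha>) has_derivative (\<lambda>h. (softmax z - \<alpha>) \<bullet> h)) (at z)"
  unfolding ce_eq_lse[OF assms, abs_def] inner_diff_left
  by (intro has_derivative_diff has_derivative_lse bounded_linear_imp_has_derivative bounded_linear_inner_right)

lemma ce_lipschitz:
  assumes "(\<Sum>j\<in>UNIV. \<alpha> $ j) = 1" and "norm \<alpha> \<le> 1"
  shows "\<bar>ce z \<alpha> - ce w \<alpha>\<bar> \<le> 2 * dist z w"
proof -
  have "\<bar>\<alpha> \<bullet> (z - w)\<bar> \<le> dist z w"
    using Cauchy_Schwarz_ineq2[of \<alpha> "z - w"] mult_right_mono[OF assms(2) norm_ge_zero[of "z - w"]]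
    by (simp add: dist_norm)
  moreover have "\<bar>lse z - lse w\<bar> \<le> dist z w"
    using lipschitz_onD[OF lse_lipschitz, of z w] by (simp add: dist_real_def)
  ultimately show ?thesis by (simp add: ce_eq_lse[OF assms(1)] inner_diff_right)
qed

lemma abs_ce_le:
  assumes "(\<Sum>j\<in>UNIV. \<alpha> $ j) = 1" and "norm \<alpha> \<le> 1"
  shows "\<bar>ce (z::real^'J) \<alpha>\<bar> \<le> 2 * norm z + ln CARD('J)"
proof -
  have "\<bar>\<alpha> \<bullet> z\<bar> \<le> norm z"
    using Cauchy_Schwarz_ineq2[of \<alpha> z] mult_right_mono[OF assms(2) norm_ge_zero[of z]] by simp
  then show ?thesis using abs_lse_le[of z] by (simp add: ce_eq_lse[OF assms(1)])
qed

lemma onehot_cols_entry: "onehot_cols A \<Longrightarrow> A $ j $ n = 0 \<or> A $ j $ n = 1"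
  unfolding onehot_cols_def by blast

lemma onehot_cols_sum: "onehot_cols A \<Longrightarrow> (\<Sum>j\<in>UNIV. column n A $ j) = 1"
  unfolding onehot_cols_def column_def by simp

lemma onehot_cols_norm: "onehot_cols A \<Longrightarrow> norm (column n A) = 1"
proof -
  assume A: "onehot_cols A"
  then have "(column n A $ j)^2 = column n A $ j" for j
    using onehot_cols_entry[OF A, of j n] by (auto simp: column_def)
  then have "(norm (column n A))^2 = 1" using onehot_cols_sum[OF A] by (simp add: norm_vec_sq)
  then show ?thesis using norm_ge_zero[of "column n A"] by (auto simp: power2_eq_1_iff)
qed

lemma has_derivative_column: "((\<lambda>Z::real^'n^'m. column n Z) has_derivative (\<lambda>h. column n h)) F"
  by (intro has_derivative_vecI)
    (simp add: column_def bounded_linear_imp_has_derivative bounded_linear_compose[OF bounded_linear_vec_nth bounded_linear_vec_nth])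

lemma column_diff: "column n (Z - W) = column n Z - column n W"
  by (simp add: column_def vec_eq_iff)

definition ce_loss_grad :: "real^'N^'J \<Rightarrow> real^'N^'J \<Rightarrow> real^'N^'J" where
  "ce_loss_grad A Z = (\<chi> j n. 2 * ce (column n Z) (column n A) * (softmax (column n Z) - column n A) $ j)"

lemma norm_Lvec_sq: "(norm (Lvec Z A))^2 = (\<Sum>n\<in>UNIV. (ce (column n Z) (column n A))^2)"
  by (simp add: norm_vec_sq Lvec_def)

lemma has_derivative_ce_loss:
  assumes A: "onehot_cols A"
  shows "((\<lambda>Z. (norm (Lvec Z A))^2) has_derivative (\<lambda>h. ce_loss_grad A Z \<bullet> h)) (at Z)"
proof -
  have "((\<lambda>Z. ce (column n Z) (column n A)) has_derivative
      (\<lambda>h. (softmax (column n Z) - column n A) \<bullet> column n h)) (at Z)" for n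
    by (rule has_derivative_compose[OF has_derivative_column has_derivative_ce[OF onehot_cols_sum[OF A]]])
  then have "((\<lambda>Z. \<Sum>n\<in>UNIV. (ce (column n Z) (column n A))^2) has_derivative
      (\<lambda>h. \<Sum>n\<in>UNIV. 2 * ce (column n Z) (column n A) * ((softmax (column n Z) - column n A) \<bullet> column n h)))
      (at Z)"
    by (auto intro!: derivative_eq_intros simp: fun_eq_iff mult_ac)
  moreover have "(\<Sum>n\<in>UNIV. 2 * ce (column n Z) (column n A) * ((softmax (column n Z) - column n A) \<bullet> column n h))
      = ce_loss_grad A Z \<bullet> h" for h
    unfolding ce_loss_grad_def inner_matrix inner_vec_def column_def
    by (simp add: sum_distrib_left mult_ac) (rule sum.swap)
  ultimately show ?thesis unfolding norm_Lvec_sq by simp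
qed

lemma grad_ce_loss: "onehot_cols A \<Longrightarrow> grad (\<lambda>Z. (norm (Lvec Z A))^2) Z = ce_loss_grad A Z"
  by (rule grad_eqI[OF has_derivative_ce_loss])

lemma abs_softmax_minus_onehot_le: "onehot_cols A \<Longrightarrow> \<bar>(softmax z - column n A) $ j\<bar> \<le> 1"
  using onehot_cols_entry[of A j n] softmax_nonneg[of z j] softmax_le_one[of z j]
  by (auto simp: column_def)

lemma abs_ce_column_le:
  fixes Z :: "real^'N^'J"
  assumes "onehot_cols A" and "norm Z \<le> B"
  shows "\<bar>ce (column n Z) (column n A)\<bar> \<le> 2 * B + ln CARD('J)"
  using abs_ce_le[OF onehot_cols_sum[OF assms(1), of n] onehot_cols_norm[OF assms(1), of n, THEN eq_refl],
      of "column n Z"]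
    norm_column_le[of n Z] assms(2)
  by simp

lemma norm_ce_loss_grad_le:
  fixes Z :: "real^'N^'J"
  assumes "onehot_cols A" and "norm Z \<le> B"
  shows "norm (ce_loss_grad A Z) \<le> sqrt (CARD('J) * CARD('N)) * (2 * (2 * B + ln CARD('J)))"
proof (rule norm_matrix_le_const)
  have "0 \<le> B" using assms(2) norm_ge_zero order_trans by blast
  fix j n
  have "\<bar>ce (column n Z) (column n A)\<bar> * \<bar>(softmax (column n Z) - column n A) $ j\<bar> \<le> (2 * B + ln CARD('J)) * 1"
    using abs_ce_column_le[OF assms] abs_softmax_minus_onehot_le[OF assms(1)] \<open>0 \<le> B\<close>
    by (intro mult_mono) auto
  then show "\<bar>ce_loss_grad A Z $ j $ n\<bar> \<le> 2 * (2 * B + ln CARD('J))"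
    by (simp add: ce_loss_grad_def abs_mult)
qed

lemma dist_column_le: "dist (column n Z) (column n (W::real^'n^'m)) \<le> dist Z W"
  using norm_column_le[of n "Z - W"] by (simp add: dist_norm column_diff)

lemma ce_column_lipschitz:
  fixes Z W :: "real^'N^'J"
  assumes "onehot_cols A"
  shows "\<bar>ce (column n Z) (column n A) - ce (column n W) (column n A)\<bar> \<le> 2 * dist Z W"
  using ce_lipschitz[OF onehot_cols_sum[OF assms, of n] onehot_cols_norm[OF assms, of n, THEN eq_refl],
      of "column n Z" "column n W"] dist_column_le[of n Z W]
  by linarith

lemma abs_ce_loss_grad_diff_le:
  fixes Z W :: "real^'N^'J"
  assumes A: "onehot_cols A" and Z: "norm Z \<le> B" and W: "norm W \<le> B"
  shows "\<bar>(ce_loss_grad A Z - ce_loss_grad A W) $ j $ n\<bar>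
    \<le> 4 * (1 + (2 * B + ln CARD('J)) * exp (4 * B)) * dist Z W"
proof -
  let ?z = "column n Z" and ?w = "column n W" and ?\<alpha> = "column n A"
  have "0 \<le> B" using Z norm_ge_zero[of Z] by linarith
  then have B: "0 \<le> 2 * B + ln CARD('J)" by simp
  have "dist Z W \<le> 2 * B" using norm_triangle_ineq4[of Z W] Z W by (simp add: dist_norm)
  then have "exp (2 * dist ?z ?w) \<le> exp (4 * B)" using dist_column_le[of n Z W] by simp
  then have "2 * dist ?z ?w * exp (2 * dist ?z ?w) \<le> 2 * dist Z W * exp (4 * B)"
    using dist_column_le[of n Z W] by (intro mult_mono) auto
  then have softmax_diff: "\<bar>softmax ?z $ j - softmax ?w $ j\<bar> \<le> 2 * dist Z W * exp (4 * B)"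
    using abs_softmax_diff_le[of ?z j ?w] by linarith
  have "(ce_loss_grad A Z - ce_loss_grad A W) $ j $ n
      = 2 * (ce ?z ?\<alpha> - ce ?w ?\<alpha>) * (softmax ?z - ?\<alpha>) $ j + 2 * ce ?w ?\<alpha> * (softmax ?z $ j - softmax ?w $ j)"
    by (simp add: ce_loss_grad_def algebra_simps)
  also have "\<bar>\<dots>\<bar> \<le> 2 * (2 * dist Z W) * 1 + 2 * (2 * B + ln CARD('J)) * (2 * dist Z W * exp (4 * B))"
  proof (rule order_trans[OF abs_triangle_ineq add_mono])
    show "\<bar>2 * (ce ?z ?\<alpha> - ce ?w ?\<alpha>) * (softmax ?z - ?\<alpha>) $ j\<bar> \<le> 2 * (2 * dist Z W) * 1"
      using ce_column_lipschitz[OF A] abs_softmax_minus_onehot_le[OF A]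
      unfolding abs_mult by (intro mult_mono mult_left_mono) auto
    show "\<bar>2 * ce ?w ?\<alpha> * (softmax ?z $ j - softmax ?w $ j)\<bar>
        \<le> 2 * (2 * B + ln CARD('J)) * (2 * dist Z W * exp (4 * B))"
      using abs_ce_column_le[OF A W] softmax_diff B unfolding abs_mult by (intro mult_mono mult_left_mono) auto
  qed
  finally show ?thesis by (simp add: algebra_simps)
qed

lemma lipschitz_ce_loss_grad:
  assumes "onehot_cols A" and "0 \<le> B"
  shows "(sqrt (CARD('J) * CARD('N)) * (4 * (1 + (2 * B + ln CARD('J)) * exp (4 * B))))-lipschitz_on
    (cball 0 B) (ce_loss_grad A :: real^'N^'J \<Rightarrow> real^'N^'J)"
proof (rule lipschitz_onI)
  fix Z W :: "real^'N^'J"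
  assume "Z \<in> cball 0 B" "W \<in> cball 0 B"
  then have "norm (ce_loss_grad A Z - ce_loss_grad A W)
      \<le> sqrt (CARD('J) * CARD('N)) * (4 * (1 + (2 * B + ln CARD('J)) * exp (4 * B)) * dist Z W)"
    using abs_ce_loss_grad_diff_le[OF assms(1)] by (intro norm_matrix_le_const) auto
  then show "dist (ce_loss_grad A Z) (ce_loss_grad A W)
      \<le> sqrt (CARD('J) * CARD('N)) * (4 * (1 + (2 * B + ln CARD('J)) * exp (4 * B))) * dist Z W"
    by (simp add: dist_norm mult_ac)
qed (use assms(2) in simp)

lemma lipschitz_grad_on_ce_loss:
  assumes "onehot_cols A" and "0 \<le> B"
  shows "lipschitz_grad_on (sqrt (CARD('J) * CARD('N)) * (4 * (1 + (2 * B + ln CARD('J)) * exp (4 * B))))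
    (cball 0 B) (\<lambda>Z::real^'N^'J. (norm (Lvec Z A))^2)"
  by (rule lipschitz_grad_onI[OF has_derivative_ce_loss lipschitz_ce_loss_grad]) (use assms in simp_all)

section \<open>The objective\<close>

lemma prod_norm_sq_le:
  assumes "\<forall>j\<in>I. norm (W j) \<le> R" and "card I \<le> n"
  shows "(\<Prod>j\<in>I. (norm (W j))^2) \<le> (1 + R^2)^n"
proof (rule prod_le_power)
  show "0 \<le> (norm (W j))^2 \<and> (norm (W j))^2 \<le> 1 + R^2" if "j \<in> I" for j
    using power_mono[OF assms(1)[rule_format, OF that] norm_ge_zero, of 2] by simp
qed (use assms in simp_all)

lemma abs_omega_le:
  fixes W :: "nat \<Rightarrow> real^'M^'M" and WL :: "real^'M^'J"
  assumes "\<forall>j\<in>{2..L-1}. norm (W j) \<le> R" and "norm WL \<le> R" and "1 \<le> k" and "1 \<le> L"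
  shows "\<bar>omega L W WL k\<bar> \<le> (1 + R^2)^L"
proof -
  have "(\<Prod>j\<in>{k+1..L-1}. (norm (W j))^2) \<le> (1 + R^2)^(L - 1)"
    using assms(1,3) by (intro prod_norm_sq_le) auto
  moreover have "(norm WL)^2 \<le> 1 + R^2"
    using power_mono[OF assms(2) norm_ge_zero, of 2] by simp
  ultimately have "omega L W WL k \<le> (1 + R^2) * (1 + R^2)^(L - 1)"
    unfolding omega_def by (intro mult_mono) (auto intro: prod_nonneg)
  also have "\<dots> = (1 + R^2)^L" using assms(4) by (simp flip: power_Suc)
  finally show ?thesis by (simp add: omega_def prod_nonneg)
qed

lemma norm_diff_bias_le:
  assumes "norm Q \<le> R" and "norm \<beta> \<le> R"
  shows "norm (Q - bias \<beta> :: real^'N^'m) \<le> R + sqrt CARD('N) * R"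
proof -
  have "sqrt CARD('N) * norm \<beta> \<le> sqrt CARD('N) * R"
    using assms(2) by (simp add: mult_left_mono)
  then show ?thesis
    using norm_triangle_ineq4[of Q "bias \<beta>"] assms(1) unfolding norm_bias by linarith
qed

lemma norm_affine_residual_le:
  fixes E :: "real^'n^'m" and Y :: "real^'N^'n" and Q :: "real^'N^'m"
  assumes "norm E \<le> R" and "norm Y \<le> Yb" and "norm \<beta> \<le> R" and "norm Q \<le> R"
  shows "norm (E ** Y + bias \<beta> - Q) \<le> R * Yb + (R + sqrt CARD('N) * R)"
proof -
  have "norm (E ** Y) \<le> R * Yb"
    using norm_matrix_mult_le[of E Y] mult_mono[OF assms(1,2)] norm_ge_zero[of Y] assms(1)
    by (meson norm_ge_zero order_trans)
  moreover have "norm (E ** Y + bias \<beta> - Q) \<le> norm (E ** Y) + norm (Q - bias \<beta>)"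
    by (metis diff_diff_eq2 norm_triangle_ineq4)
  ultimately show ?thesis using norm_diff_bias_le[OF assms(4,3)] by linarith
qed

lemma lipschitz_grad_on_omega_mult:
  fixes W :: "nat \<Rightarrow> real^'M^'M"
  assumes "\<forall>j\<in>{2..L-1}. norm (W j) \<le> R" and "1 \<le> k" and "\<bar>a\<bar> \<le> T"
  shows "lipschitz_grad_on (2 * ((1 + R^2)^L * T)) U (\<lambda>V::real^'M^'J. omega L W V k * a)"
proof -
  define P where "P = (\<Prod>j\<in>{k+1..L-1}. (norm (W j))^2)"
  have "0 \<le> P" "P \<le> (1 + R^2)^L"
    unfolding P_def using assms(1,2) by (auto intro: prod_nonneg prod_norm_sq_le)
  then have "\<bar>P * a\<bar> \<le> (1 + R^2)^L * T"
    using assms(3) by (simp add: abs_mult mult_mono)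
  then have "lipschitz_grad_on (2 * ((1 + R^2)^L * T)) U (\<lambda>V::real^'M^'J. (P * a) * (norm (V - 0))^2)"
    by (intro lipschitz_grad_on_mono[OF lipschitz_grad_on_norm_sq]) auto
  then show ?thesis by (simp add: omega_def P_def mult_ac)
qed

lemma lipschitz_grad_on_fun_upd:
  assumes "lipschitz_grad_on K U f" and "0 \<le> K"
  shows "lipschitz_grad_on K U (\<lambda>y. f ((c(l := y)) m))"
proof (cases "l = m")
  case True
  then show ?thesis using assms(1) by simp
next
  case False
  then show ?thesis using assms(2) by simp (rule lipschitz_grad_on_mono[OF lipschitz_grad_on_const], auto)
qed

lemma lipschitz_grad_on_norm_sq_update: "lipschitz_grad_on 2 U (\<lambda>y. (norm (P - (c(l := y)) k))^2)"
  using lipschitz_grad_on_fun_upd[OF lipschitz_grad_on_norm_sq[of 1 U P], of c l k]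
  by (simp add: norm_minus_commute)

lemma lipschitz_grad_on_residual_update:
  fixes k :: nat
  assumes "lipschitz_grad_on K U (\<lambda>y. (norm (V ** sigm f y - (c k - P)))^2)" and "2 \<le> K" and "1 \<le> k"
  shows "lipschitz_grad_on K U (\<lambda>y. (norm (V ** sigm f ((c(l := y)) (k - 1)) + P - (c(l := y)) k))^2)"
proof (cases "l = k - 1")
  case True
  moreover have "k \<noteq> k - 1" using assms(3) by simp
  ultimately show ?thesis using assms(1) by (simp add: algebra_simps)
next
  case False
  then show ?thesis
    using lipschitz_grad_on_norm_sq_update[of U "V ** sigm f (c (k - 1)) + P" c l k] assms(2)
    by (simp add: lipschitz_grad_on_mono)
qed

context bounded_activation
begin

lemma lipschitz_grad_on_loss_activation:
  fixes A :: "real^'N^'J"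
  assumes A: "onehot_cols A" and R: "0 \<le> R"
  obtains K where "0 \<le> K"
    and "\<And>WL :: real^'M^'J. norm WL \<le> R \<Longrightarrow>
      lipschitz_grad_on K UNIV (\<lambda>Y::real^'N^'M. (norm (Lvec (WL ** sigm \<sigma> Y) A))^2)"
proof -
  define B where "B = R * (sqrt (CARD('M) * CARD('N)) * M0)"
  have B: "0 \<le> B" unfolding B_def using R bounded[of 0] by simp
  define K where "K = sqrt (CARD('J) * CARD('N)) * (4 * (1 + (2 * B + ln CARD('J)) * exp (4 * B)))"
  define G where "G = sqrt (CARD('J) * CARD('N)) * (2 * (2 * B + ln CARD('J)))"
  show thesis
  proof (rule that)
    show "0 \<le> R * (M2 * G + M1^2 * R * K)"
      unfolding G_def K_def using R B lipschitz_on_nonneg[OF derivative_lipschitz] by simp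
    fix WL :: "real^'M^'J"
    assume "norm WL \<le> R"
    then show "lipschitz_grad_on (R * (M2 * G + M1^2 * R * K)) UNIV
        (\<lambda>Y::real^'N^'M. (norm (Lvec (WL ** sigm \<sigma> Y) A))^2)"
      using lipschitz_grad_on_ce_loss[OF A B] norm_ce_loss_grad_le[OF A]
      unfolding K_def G_def B_def by (intro lipschitz_grad_on_comp_activation) (auto simp: grad_ce_loss[OF A])
  qed
qed

lemma lipschitz_grad_on_residual_activation:
  assumes R: "0 \<le> R" and Q: "0 \<le> Qb"
  obtains K where "2 \<le> K"
    and "\<And>(V :: real^'M^'M) (Q :: real^'N^'M). norm V \<le> R \<Longrightarrow> norm Q \<le> Qb \<Longrightarrow>
      lipschitz_grad_on K UNIV (\<lambda>Y::real^'N^'M. (norm (V ** sigm \<sigma> Y - Q))^2)"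
proof -
  define B where "B = R * (sqrt (CARD('M) * CARD('N)) * M0)"
  have B: "0 \<le> B" unfolding B_def using R bounded[of 0] by simp
  define K where "K = R * (M2 * (2 * (B + Qb)) + M1^2 * R * 2)"
  show thesis
  proof (rule that)
    show "2 \<le> K + 2"
      unfolding K_def using R B Q lipschitz_on_nonneg[OF derivative_lipschitz] by simp
    fix V :: "real^'M^'M" and Q :: "real^'N^'M"
    assume "norm V \<le> R" "norm Q \<le> Qb"
    have "norm (grad (\<lambda>Z. 1 * (norm (Z - Q))^2) Z) \<le> 2 * (B + Qb)" if "norm Z \<le> B" for Z :: "real^'N^'M"
      unfolding grad_norm_sq using norm_triangle_ineq4[of Z Q] that \<open>norm Q \<le> Qb\<close> by simp
    then have "lipschitz_grad_on K UNIV (\<lambda>Y::real^'N^'M. 1 * (norm (V ** sigm \<sigma> Y - Q))^2)"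
      using lipschitz_grad_on_norm_sq[of 1 "cball 0 B" Q] \<open>norm V \<le> R\<close>
      unfolding K_def B_def by (intro lipschitz_grad_on_comp_activation) auto
    then show "lipschitz_grad_on (K + 2) UNIV (\<lambda>Y::real^'N^'M. (norm (V ** sigm \<sigma> Y - Q))^2)"
      by (simp add: lipschitz_grad_on_mono)
  qed
qed

lemma lipschitz_grad_on_loss_mult_sigm:
  fixes A :: "real^'N^'J"
  assumes A: "onehot_cols A" and R: "0 \<le> R"
  obtains K where "0 \<le> K"
    and "\<And>C :: real^'N^'M.
      lipschitz_grad_on K (cball 0 R) (\<lambda>V::real^'M^'J. (norm (Lvec (V ** sigm \<sigma> C) A))^2)"
proof -
  define S0 where "S0 = sqrt (CARD('M) * CARD('N)) * M0"
  have S0: "0 \<le> S0" unfolding S0_def using bounded[of 0] by simp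
  define K where "K = sqrt (CARD('J) * CARD('N)) * (4 * (1 + (2 * (R * S0) + ln CARD('J)) * exp (4 * (R * S0))))"
  have K: "0 \<le> K" unfolding K_def using R S0 by simp
  show thesis
  proof (rule that)
    show "0 \<le> K * S0^2" using K by simp
    fix C :: "real^'N^'M"
    have S: "norm (sigm \<sigma> C) \<le> S0" unfolding S0_def by (rule norm_sigm_le[OF bounded])
    then have "R * norm (sigm \<sigma> C) \<le> R * S0" using R by (rule mult_left_mono)
    then have "cball 0 (R * norm (sigm \<sigma> C)) \<subseteq> cball 0 (R * S0)" by auto
    then have "lipschitz_grad_on K (cball 0 (R * norm (sigm \<sigma> C))) (\<lambda>Z. (norm (Lvec Z A))^2)"
      using lipschitz_grad_on_ce_loss[OF A, of "R * S0"] R S0 unfolding K_def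
      by (auto elim: lipschitz_grad_on_mono)
    then have "lipschitz_grad_on (K * (norm (sigm \<sigma> C))^2) (cball 0 R)
        (\<lambda>V::real^'M^'J. (norm (Lvec (V ** sigm \<sigma> C) A))^2)"
      by (rule lipschitz_grad_on_comp_mult_right)
    moreover have "K * (norm (sigm \<sigma> C))^2 \<le> K * S0^2"
      using S K by (intro mult_left_mono power_mono) auto
    ultimately show "lipschitz_grad_on (K * S0^2) (cball 0 R)
        (\<lambda>V::real^'M^'J. (norm (Lvec (V ** sigm \<sigma> C) A))^2)"
      by (elim lipschitz_grad_on_mono) auto
  qed
qed

lemma lipschitz_grad_on_Sobj_c:
  fixes X :: "real^'N^'d" and A :: "real^'N^'J"
  assumes A: "onehot_cols A" and L: "2 \<le> L" and R: "0 \<le> R"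
  obtains C where "0 < C"
    and "\<And>(W1 :: real^'d^'M) (W :: nat \<Rightarrow> real^'M^'M) (WL :: real^'M^'J) b c l.
      \<forall>k\<in>{2..L-1}. norm (W k) \<le> R \<Longrightarrow> norm WL \<le> R \<Longrightarrow>
      \<forall>k\<in>{1..L-1}. norm (b k) \<le> R \<and> norm (c k) \<le> R \<Longrightarrow>
      lipschitz_grad_on C UNIV (\<lambda>y. Sobj \<sigma> X A L W1 W WL b (c(l := y)))"
proof -
  obtain K0 where K0: "0 \<le> K0"
    and loss: "\<And>WL :: real^'M^'J. norm WL \<le> R \<Longrightarrow>
      lipschitz_grad_on K0 UNIV (\<lambda>Y::real^'N^'M. (norm (Lvec (WL ** sigm \<sigma> Y) A))^2)"
    using lipschitz_grad_on_loss_activation[OF A R] by blast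
  obtain K1 where K1: "2 \<le> K1"
    and residual: "\<And>(V :: real^'M^'M) (Q :: real^'N^'M). norm V \<le> R \<Longrightarrow> norm Q \<le> R + sqrt CARD('N) * R \<Longrightarrow>
      lipschitz_grad_on K1 UNIV (\<lambda>Y::real^'N^'M. (norm (V ** sigm \<sigma> Y - Q))^2)"
    using lipschitz_grad_on_residual_activation[OF R, of "R + sqrt CARD('N) * R"] R by auto
  define \<Omega> where "\<Omega> = (1 + R^2)^L"
  have \<Omega>: "1 \<le> \<Omega>" unfolding \<Omega>_def by simp
  show thesis
  proof (rule that[of "K0 + real L * (\<Omega> * K1) + 1"])
    have "0 \<le> real L * (\<Omega> * K1)" using K1 \<Omega> by simp
    then show "0 < K0 + real L * (\<Omega> * K1) + 1" using K0 by linarith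
    fix W1 :: "real^'d^'M" and W :: "nat \<Rightarrow> real^'M^'M" and WL :: "real^'M^'J"
      and b :: "nat \<Rightarrow> real^'M" and c :: "nat \<Rightarrow> real^'N^'M" and l
    assume W: "\<forall>k\<in>{2..L-1}. norm (W k) \<le> R" and WL: "norm WL \<le> R"
      and bc: "\<forall>k\<in>{1..L-1}. norm (b k) \<le> R \<and> norm (c k) \<le> R"
    have \<omega>: "\<bar>omega L W WL k\<bar> \<le> \<Omega>" if "1 \<le> k" for k
      unfolding \<Omega>_def using abs_omega_le[OF W WL that] L by simp
    have "lipschitz_grad_on K0 UNIV (\<lambda>y. (norm (Lvec (WL ** sigm \<sigma> ((c(l := y)) (L - 1))) A))^2)"
      by (rule lipschitz_grad_on_fun_upd[OF loss[OF WL] K0])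
    moreover have "lipschitz_grad_on (\<Omega> * K1) UNIV
        (\<lambda>y. omega L W WL k * (norm (W k ** sigm \<sigma> ((c(l := y)) (k - 1)) + bias (b k) - (c(l := y)) k))^2)"
      if k: "k \<in> {2..L-1}" for k
    proof (rule lipschitz_grad_on_cmult[OF lipschitz_grad_on_residual_update \<omega>])
      have "norm (c k - bias (b k)) \<le> R + sqrt CARD('N) * R"
        using bc k by (intro norm_diff_bias_le) auto
      then show "lipschitz_grad_on K1 UNIV (\<lambda>y. (norm (W k ** sigm \<sigma> y - (c k - bias (b k))))^2)"
        using residual W k by simp
    qed (use k K1 in auto)
    moreover have "lipschitz_grad_on (\<Omega> * K1) UNIV
        (\<lambda>y. omega L W WL 1 * (norm (W1 ** X + bias (b 1) - (c(l := y)) 1))^2)"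
      using K1 by (intro lipschitz_grad_on_cmult[OF _ \<omega>] lipschitz_grad_on_mono[OF lipschitz_grad_on_norm_sq_update]) auto
    ultimately have "lipschitz_grad_on (K0 + (\<Sum>k\<in>{2..L-1}. \<Omega> * K1) + \<Omega> * K1) UNIV
        (\<lambda>y. Sobj \<sigma> X A L W1 W WL b (c(l := y)))"
      unfolding Sobj_def by (intro lipschitz_grad_on_add lipschitz_grad_on_sum) auto
    moreover have "(\<Sum>k\<in>{2..L-1}. \<Omega> * K1) + \<Omega> * K1 \<le> real L * (\<Omega> * K1)"
      using L \<Omega> K1 by (simp add: algebra_simps mult_right_mono)
    ultimately show "lipschitz_grad_on (K0 + real L * (\<Omega> * K1) + 1) UNIV
        (\<lambda>y. Sobj \<sigma> X A L W1 W WL b (c(l := y)))"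
      by (elim lipschitz_grad_on_mono) auto
  qed
qed

lemma lipschitz_grad_on_Sobj_WL:
  fixes X :: "real^'N^'d" and A :: "real^'N^'J"
  assumes A: "onehot_cols A" and L: "2 \<le> L" and R: "0 \<le> R"
  obtains C where "0 < C"
    and "\<And>(W1 :: real^'d^'M) (W :: nat \<Rightarrow> real^'M^'M) b c.
      norm W1 \<le> R \<Longrightarrow> \<forall>k\<in>{2..L-1}. norm (W k) \<le> R \<Longrightarrow>
      \<forall>k\<in>{1..L-1}. norm (b k) \<le> R \<and> norm (c k) \<le> R \<Longrightarrow>
      lipschitz_grad_on C (cball 0 R) (\<lambda>V::real^'M^'J. Sobj \<sigma> X A L W1 W V b c)"
proof -
  obtain K where K: "0 \<le> K"
    and loss: "\<And>C :: real^'N^'M.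
      lipschitz_grad_on K (cball 0 R) (\<lambda>V::real^'M^'J. (norm (Lvec (V ** sigm \<sigma> C) A))^2)"
    using lipschitz_grad_on_loss_mult_sigm[OF A R] by blast
  define S0 where "S0 = sqrt (CARD('M) * CARD('N)) * M0"
  define T where "T = (R * max S0 (norm X) + (R + sqrt CARD('N) * R))^2"
  define K' where "K' = 2 * ((1 + R^2)^L * T)"
  have "0 \<le> K'" unfolding K'_def T_def by simp
  show thesis
  proof (rule that[of "K + real L * K' + 1"])
    have "0 \<le> real L * K'" using \<open>0 \<le> K'\<close> by simp
    then show "0 < K + real L * K' + 1" using K by linarith
    fix W1 :: "real^'d^'M" and W :: "nat \<Rightarrow> real^'M^'M" and b :: "nat \<Rightarrow> real^'M" and c :: "nat \<Rightarrow> real^'N^'M"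
    assume W1: "norm W1 \<le> R" and W: "\<forall>k\<in>{2..L-1}. norm (W k) \<le> R"
      and bc: "\<forall>k\<in>{1..L-1}. norm (b k) \<le> R \<and> norm (c k) \<le> R"
    have residual: "lipschitz_grad_on K' (cball 0 R)
        (\<lambda>V::real^'M^'J. omega L W V k * (norm (E ** Y + bias (b k) - c k))^2)"
      if "norm E \<le> R" "norm Y \<le> max S0 (norm X)" "k \<in> {1..L-1}"
      for E :: "real^'n^'M" and Y :: "real^'N^'n" and k
    proof -
      have "norm (E ** Y + bias (b k) - c k) \<le> R * max S0 (norm X) + (R + sqrt CARD('N) * R)"
        using bc that by (intro norm_affine_residual_le) auto
      then have "\<bar>(norm (E ** Y + bias (b k) - c k))^2\<bar> \<le> T"
        unfolding T_def by (simp add: power_mono)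
      then show ?thesis unfolding K'_def using W that(3) by (intro lipschitz_grad_on_omega_mult) auto
    qed
    have "norm (sigm \<sigma> C :: real^'N^'M) \<le> max S0 (norm X)" for C
      unfolding S0_def by (rule order_trans[OF norm_sigm_le[OF bounded]]) simp
    then have "lipschitz_grad_on (K + (\<Sum>k\<in>{2..L-1}. K') + K') (cball 0 R)
        (\<lambda>V::real^'M^'J. Sobj \<sigma> X A L W1 W V b c)"
      unfolding Sobj_def using W W1 L
      by (intro lipschitz_grad_on_add lipschitz_grad_on_sum loss residual) auto
    moreover have "(\<Sum>k\<in>{2..L-1}. K') + K' \<le> real L * K'"
      using L \<open>0 \<le> K'\<close> by (simp add: algebra_simps mult_right_mono)
    ultimately show "lipschitz_grad_on (K + real L * K' + 1) (cball 0 R)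
        (\<lambda>V::real^'M^'J. Sobj \<sigma> X A L W1 W V b c)"
      by (elim lipschitz_grad_on_mono) auto
  qed
qed

end

theorem lemma3p3:
  fixes \<sigma> \<sigma>' \<sigma>'' :: "real \<Rightarrow> real"
    and X :: "real^'N^'d" and A :: "real^'N^'J"
    and L :: nat and M0 M1 M2 R :: real
  assumes L: "L \<ge> 2"
    and J: "CARD('J) \<ge> 2"
    and A: "onehot_cols A"
    and d1: "\<And>z. (\<sigma> has_real_derivative \<sigma>' z) (at z)"
    and d2: "\<And>z. (\<sigma>' has_real_derivative \<sigma>'' z) (at z)"
    and c2: "continuous_on UNIV \<sigma>''"
    and M: "M0 > 0" "M1 > 0" "M2 > 0"
    and b0: "\<And>z. \<bar>\<sigma> z\<bar> \<le> M0"
    and b1: "\<And>z. \<bar>\<sigma>' z\<bar> \<le> M1"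
    and b2: "\<And>z. \<bar>\<sigma>'' z\<bar> \<le> M2"
    and R: "R > 0"
  shows "\<exists>C :: nat \<Rightarrow> real. (\<forall>l\<in>{1..L}. C l > 0) \<and>
    (\<forall>(W1 :: real^'d^'M) (W :: nat \<Rightarrow> real^'M^'M) (WL :: real^'M^'J)
        (b :: nat \<Rightarrow> real^'M) (c :: nat \<Rightarrow> real^'N^'M).
      norm W1 \<le> R \<and> (\<forall>l\<in>{2..L-1}. norm (W l) \<le> R) \<and> norm WL \<le> R \<and>
      (\<forall>l\<in>{1..L-1}. norm (b l) \<le> R \<and> norm (c l) \<le> R) \<longrightarrow>
      (\<forall>l\<in>{1..L-1}.
         (\<forall>x. ((\<lambda>y. Sobj \<sigma> X A L W1 W WL b (c(l := y))) has_derivative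
                 (\<lambda>h. grad (\<lambda>y. Sobj \<sigma> X A L W1 W WL b (c(l := y))) x \<bullet> h)) (at x)) \<and>
         (\<forall>ch ct. norm (grad (\<lambda>y. Sobj \<sigma> X A L W1 W WL b (c(l := y))) ch
                      - grad (\<lambda>y. Sobj \<sigma> X A L W1 W WL b (c(l := y))) ct)
                  \<le> C l * norm (ch - ct))) \<and>
      (\<forall>x. norm x \<le> R \<longrightarrow>
         ((\<lambda>V. Sobj \<sigma> X A L W1 W V b c) has_derivative
            (\<lambda>h. grad (\<lambda>V. Sobj \<sigma> X A L W1 W V b c) x \<bullet> h)) (at x)) \<and>
      (\<forall>Wh Wt. norm Wh \<le> R \<and> norm Wt \<le> R \<longrightarrow>
         norm (grad (\<lambda>V. Sobj \<sigma> X A L W1 W V b c) Wh - grad (\<lambda>V. Sobj \<sigma> X A L W1 W V b c) Wt)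
           \<le> C L * norm (Wh - Wt)))"
proof -
  interpret bounded_activation \<sigma> \<sigma>' M0 M1 M2
  proof
    show "M2-lipschitz_on UNIV \<sigma>'"
      using field_differentiable_bound[of UNIV \<sigma>' \<sigma>'' M2] d2 b2 M
      by (intro lipschitz_onI) (auto simp: dist_norm)
  qed (use d1 b0 b1 in auto)
  have R0: "0 \<le> R" using R by simp
  obtain C1 where "0 < C1" and part_c:
    "\<And>(W1 :: real^'d^'M) (W :: nat \<Rightarrow> real^'M^'M) (WL :: real^'M^'J) b c l.
      \<forall>k\<in>{2..L-1}. norm (W k) \<le> R \<Longrightarrow> norm WL \<le> R \<Longrightarrow>
      \<forall>k\<in>{1..L-1}. norm (b k) \<le> R \<and> norm (c k) \<le> R \<Longrightarrow>
      lipschitz_grad_on C1 UNIV (\<lambda>y. Sobj \<sigma> X A L W1 W WL b (c(l := y)))"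
    using lipschitz_grad_on_Sobj_c[OF A L R0] by blast
  obtain CL where "0 < CL" and part_WL:
    "\<And>(W1 :: real^'d^'M) (W :: nat \<Rightarrow> real^'M^'M) b c.
      norm W1 \<le> R \<Longrightarrow> \<forall>k\<in>{2..L-1}. norm (W k) \<le> R \<Longrightarrow>
      \<forall>k\<in>{1..L-1}. norm (b k) \<le> R \<and> norm (c k) \<le> R \<Longrightarrow>
      lipschitz_grad_on CL (cball 0 R) (\<lambda>V::real^'M^'J. Sobj \<sigma> X A L W1 W V b c)"
    using lipschitz_grad_on_Sobj_WL[OF A L R0] by blast
  show ?thesis
    using \<open>0 < C1\<close> \<open>0 < CL\<close> L
    by (intro exI[of _ "\<lambda>l. if l = L then CL else C1"])
      (auto intro!: lipschitz_grad_onD(1)[OF part_c] lipschitz_grad_onD(1)[OF part_WL]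
        lipschitz_on_normD[OF lipschitz_grad_onD(2)[OF part_c]]
        lipschitz_on_normD[OF lipschitz_grad_onD(2)[OF part_WL]])
qed

end
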